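(* Let $F$ be the elementary cellular automaton with rule number 5. For every nonempty finite word $u\in\{0,1\}^*$, the deterministic communication complexity of $\textsc{SInv}_{F,u}$ restricted to inputs of length $n$ is bounded by a constant independent of $n$.
   Context: An elementary cellular automaton (ECA) with rule number $N\in\{0,\dots,255\}$ is the map $F:\{0,1\}^{\mathbb Z}\to\{0,1\}^{\mathbb Z}$ given by $F(x)_i=f(x_{i-1},x_i,x_{i+1})$. Here the local rule $f:\{0,1\}^3\to\{0,1\}$ is determined by $N=\sum_{a,b,c\in\{0,1\}}2^{4a+2b+c}f(a,b,c)$. For a nonempty finite word $u$, $p_u\in\{0,1\}^{\mathbb Z}$ is defined by $(p_u)_i=u_{i\bmod |u|}$. For a finite word $x$, $p_u[x]$ is the configuration equal to $x$ on positions $0,\dots,|x|-1$ and to $p_u$ elsewhere. $\textsc{SInv}_{F,u}$ is the decision problem: on input a finite word $x$, decide whether there is an integer $w$ such that for all $t\ge0$ the set of positions where $F^t(p_u)$ and $F^t(p_u[x])$ differ is contained in an interval of length $w$. For each $n$, it is regarded as a function $\{0,1\}^n\to\{0,1\}$. For a function $g:X\times Y\to Z$, $D(g)$ is the minimal depth of a deterministic two-party protocol computing $g$. In such a protocol, Alice knows $x$ and Bob knows $y$. The protocol is a binary tree: each internal node is labelled by a function of Alice's input only or of Bob's input only, with values in $\{\text{left},\text{right}\}$, and each leaf is labelled by an output value. For $g:\{0,1\}^m\to Z$, set $D(g)=\max_{0\le i<m}D(g_i)$, where $g_i:\{0,1\}^i\times\{0,1\}^{m-i}\to Z$ is $g_i(x,y)=g(xy)$.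 *)

theory Defs
  imports Main
begin

type_synonym config = "int \<Rightarrow> bool"

definition eca_local :: "nat \<Rightarrow> bool \<Rightarrow> bool \<Rightarrow> bool \<Rightarrow> bool" where
  "eca_local N a b c = bit N (4 * of_bool a + 2 * of_bool b + of_bool c)"

definition eca :: "nat \<Rightarrow> config \<Rightarrow> config" where
  "eca N x = (\<lambda>i. eca_local N (x (i - 1)) (x i) (x (i + 1)))"

text \<open>Periodic configuration p_u and p_u[x]; words are bool lists (True = 1).\<close>
definition periodic :: "bool list \<Rightarrow> config" where
  "periodic u = (\<lambda>i. u ! nat (i mod int (length u)))"

definition patch :: "bool list \<Rightarrow> bool list \<Rightarrow> config" where
  "patch u x = (\<lambda>i. if 0 \<le> i \<and> i < int (length x) then x ! nat i else periodic u i)"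

definition diff_set :: "nat \<Rightarrow> bool list \<Rightarrow> bool list \<Rightarrow> nat \<Rightarrow> int set" where
  "diff_set N u x t = {i. (eca N ^^ t) (periodic u) i \<noteq> (eca N ^^ t) (patch u x) i}"

definition SInv :: "nat \<Rightarrow> bool list \<Rightarrow> bool list \<Rightarrow> bool" where
  "SInv N u x = (\<exists>w::int. \<forall>t. \<exists>a::int. diff_set N u x t \<subseteq> {a..a + w})"

datatype ('a, 'b, 'z) protocol =
    Leaf 'z
  | AliceNode "'a \<Rightarrow> bool" "('a, 'b, 'z) protocol" "('a, 'b, 'z) protocol"
  | BobNode "'b \<Rightarrow> bool" "('a, 'b, 'z) protocol" "('a, 'b, 'z) protocol"

fun run :: "('a, 'b, 'z) protocol \<Rightarrow> 'a \<Rightarrow> 'b \<Rightarrow> 'z" where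
  "run (Leaf z) x y = z"
| "run (AliceNode f l r) x y = (if f x then run l x y else run r x y)"
| "run (BobNode f l r) x y = (if f y then run l x y else run r x y)"

fun depth :: "('a, 'b, 'z) protocol \<Rightarrow> nat" where
  "depth (Leaf z) = 0"
| "depth (AliceNode f l r) = Suc (max (depth l) (depth r))"
| "depth (BobNode f l r) = Suc (max (depth l) (depth r))"

definition computes :: "('a, 'b, 'z) protocol \<Rightarrow> 'a set \<Rightarrow> 'b set \<Rightarrow> ('a \<Rightarrow> 'b \<Rightarrow> 'z) \<Rightarrow> bool" where
  "computes p X Y g = (\<forall>x\<in>X. \<forall>y\<in>Y. run p x y = g x y)"

definition cc :: "'a set \<Rightarrow> 'b set \<Rightarrow> ('a \<Rightarrow> 'b \<Rightarrow> 'z) \<Rightarrow> nat" where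
  "cc X Y g = (LEAST d. \<exists>p :: ('a, 'b, 'z) protocol. computes p X Y g \<and> depth p = d)"

definition cc_word :: "nat \<Rightarrow> (bool list \<Rightarrow> 'z) \<Rightarrow> nat" where
  "cc_word m g = (if m = 0 then 0 else
     Max ((\<lambda>i. cc {x :: bool list. length x = i} {y :: bool list. length y = m - i}
                   (\<lambda>x y. g (x @ y))) ` {..<m}))"

end

theory Submission
  imports Defs
begin

text \<open>
  Rule 5 is F(x)_i = \<not>x_{i-1} \<and> \<not>x_{i+1}; two steps give
  F^2(x)_i = x_i \<or> (x_{i-2} \<and> x_{i+2}), and from this F^4 = F^2.  Hence the
  iterates of F form a finite set {F^0,...,F^3}.  Every ECA is local: F^k(c)_i
  depends only on c on [i-k, i+k].  So if only the iterates F^k with k < K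
  occur, a finite patch x spreads at most K cells to each side, and the
  difference sets stay in a window of width |x| + 2K for all times.  Thus
  SInv_{F,u} holds for every input, i.e. it is the constant function True, and
  a constant function is computed by a single leaf, so all its communication
  complexities are 0.
\<close>

lemma eca_funpow_local:
  assumes "\<And>j. \<bar>j - i\<bar> \<le> int k \<Longrightarrow> c j = d j"
  shows "(eca N ^^ k) c i = (eca N ^^ k) d i"
  using assms
proof (induction k arbitrary: i)
  case 0
  then show ?case by simp
next
  case (Suc k)
  have neighbours: "(eca N ^^ k) c j = (eca N ^^ k) d j" if "\<bar>j - i\<bar> \<le> 1" for j
    by (rule Suc.IH) (use Suc.prems that in auto)
  have "eca N ((eca N ^^ k) c) i = eca N ((eca N ^^ k) d) i"
    unfolding eca_def[of N "(eca N ^^ k) c"] eca_def[of N "(eca N ^^ k) d"]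
    by (simp add: neighbours)
  then show ?case
    by simp
qed

lemma funpow_eventually_periodic:
  fixes f :: "'a \<Rightarrow> 'a"
  assumes period: "f ^^ (m + p) = f ^^ m" and "0 < p"
  shows "\<exists>k < m + p. f ^^ t = f ^^ k"
proof (induction t rule: less_induct)
  case (less t)
  show ?case
  proof (cases "t < m + p")
    case True
    then show ?thesis by blast
  next
    case False
    then obtain n where t: "t = n + (m + p)"
      by (metis add.commute le_Suc_ex not_less)
    have "f ^^ t = f ^^ n \<circ> f ^^ (m + p)"
      by (simp add: t funpow_add)
    also have "\<dots> = f ^^ (n + m)"
      by (metis period funpow_add)
    finally have "f ^^ t = f ^^ (n + m)" .
    moreover have "n + m < t"
      using t \<open>0 < p\<close> by simp
    ultimately show ?thesis
      using less[of "n + m"] by metis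
  qed
qed

lemma SInv_of_bounded_iterates:
  assumes iterates: "\<And>t. \<exists>k < K. eca N ^^ t = eca N ^^ k"
  shows "SInv N u x"
proof -
  have "diff_set N u x t \<subseteq> {- int K .. - int K + (int (length x) + 2 * int K)}" for t
  proof
    fix i assume i: "i \<in> diff_set N u x t"
    obtain k where k: "k < K" "eca N ^^ t = eca N ^^ k"
      using iterates by blast
    show "i \<in> {- int K .. - int K + (int (length x) + 2 * int K)}"
    proof (rule ccontr)
      assume "i \<notin> {- int K .. - int K + (int (length x) + 2 * int K)}"
      then have far: "i < - int K \<or> int (length x) + int K < i"
        by auto
      have "periodic u j = patch u x j" if "\<bar>j - i\<bar> \<le> int k" for j
      proof -
        have "j < 0 \<or> int (length x) \<le> j"
          using far that k(1) by (simp add: abs_le_iff) linarith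
        then show ?thesis
          by (auto simp: patch_def)
      qed
      then have "(eca N ^^ k) (periodic u) i = (eca N ^^ k) (patch u x) i"
        by (rule eca_funpow_local)
      with i k(2) show False
        by (simp add: diff_set_def)
    qed
  qed
  then show ?thesis
    unfolding SInv_def by blast
qed

lemma cc_const: "cc X Y (\<lambda>x y. z) = 0"
  unfolding cc_def
  by (rule Least_eq_0, rule exI[of _ "Leaf z"], simp add: computes_def)

lemma cc_word_const: "cc_word m (\<lambda>w. z) = 0"
proof (cases "m = 0")
  case False
  then have "(\<lambda>i. cc {x :: bool list. length x = i} {y :: bool list. length y = m - i}
                  (\<lambda>x y. z)) ` {..<m} = {0}"
    by (auto simp: cc_const)
  with False show ?thesis
    by (simp add: cc_word_def)
qed (simp add: cc_word_def)

lemma eca5: "eca 5 x i = (\<not> x (i - 1) \<and> \<not> x (i + 1))"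
proof -
  have "eca_local 5 a b c = (\<not> a \<and> \<not> c)" for a b c
    by (cases a; cases b; cases c; simp add: eca_local_def bit_0)
  then show ?thesis
    by (simp add: eca_def)
qed

lemma eca5_twice: "eca 5 (eca 5 x) i = (x i \<or> (x (i - 2) \<and> x (i + 2)))"
proof -
  have shifts: "i - 1 - 1 = i - 2" "i - 1 + 1 = i" "i + 1 - 1 = i" "i + 1 + 1 = i + 2"
    by simp_all
  show ?thesis
    unfolding eca5 shifts by blast
qed

lemma eca5_period: "eca 5 ^^ (2 + 2) = eca 5 ^^ 2"
proof (rule ext, rule ext)
  fix x :: config and i :: int
  have shifts: "i - 2 - 2 = i - 4" "i - 2 + 2 = i" "i + 2 - 2 = i" "i + 2 + 2 = i + 4"
    by simp_all
  have "eca 5 (eca 5 (eca 5 (eca 5 x))) i = eca 5 (eca 5 x) i"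
    unfolding eca5_twice[of "eca 5 (eca 5 x)"] unfolding eca5_twice shifts by blast
  then show "(eca 5 ^^ (2 + 2)) x i = (eca 5 ^^ 2) x i"
    by (simp add: numeral_eq_Suc)
qed

theorem mainTheorem3:
  fixes u :: "bool list"
  assumes "u \<noteq> []"
  shows "\<exists>C::nat. \<forall>n. cc_word n (SInv 5 u) \<le> C"
proof -
  have "\<exists>k < 2 + 2. eca 5 ^^ t = eca 5 ^^ k" for t
    by (rule funpow_eventually_periodic[OF eca5_period]) simp
  then have "SInv 5 u = (\<lambda>x. True)"
    using SInv_of_bounded_iterates by blast
  then have "cc_word n (SInv 5 u) = 0" for n
    by (simp add: cc_word_const)
  then show ?thesis
    by auto
qed

end
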